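(* Let $n\ge1$ and $\mathbf i\in\Sigma_{n+1}$. (1) If $\mathrm{ind}_D(\mathbf i)=0$, then for every $k\in[n]$ the path in $G(\mathbf i,k)$ with wire-expression $\ell_k\to\ell_{n+1}\to\ell_{k+1}$ (go up $\ell_k$ from $L_k$ to $\ell_k\cap\ell_{n+1}$, switch to $\ell_{n+1}$, go down to $\ell_{n+1}\cap\ell_{k+1}$, switch to $\ell_{k+1}$, go down to $L_{k+1}$) is a rigorous path; it is the D-canonical path with unique peak $\ell_k\cap\ell_{n+1}$. (2) If $\mathrm{ind}_A(\mathbf i)=0$, then for every $k\in[n]$ the path in $G(\mathbf i,k)$ with wire-expression $\ell_k\to\ell_1\to\ell_{k+1}$ is a rigorous path; it is the A-canonical path with unique peak $\ell_1\cap\ell_{k+1}$.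
   Context: $N=n(n+1)/2$; $\Sigma_{n+1}$: reduced words $(i_1,\dots,i_N)$ of the longest element of $\mathfrak S_{n+1}$ in $s_i=(i,i+1)$. Wiring diagram $G(\mathbf i)$: $n+1$ wires $\ell_1,\dots,\ell_{n+1}$ run top to bottom through positions $1,\dots,n+1$; at the top $\ell_k$ is in position $k$; the $j$-th node swaps the wires in positions $i_j,i_j+1$; at the bottom $\ell_k$ is in position $n+2-k$ and ends at $L_k$. Rigorous paths: for $k\in[n]$, $G(\mathbf i,k)$ has $\ell_1,\dots,\ell_k$ oriented upward and the rest downward. A rigorous path in $G(\mathbf i,k)$ starts at $L_k$, ends at $L_{k+1}$, moves along wires in their orientation, switches wires only at their crossing node, passes each node at most once, and never passes straight through $\ell_a\cap\ell_b$ while on $\ell_a$ when both are downward with $a>b$ or both upward with $a<b$. Indices: a 2-move exchanges adjacent letters $i,j$ with $|i-j|>1$, generating $\sim$. Every $\mathbf i$ satisfies $\mathbf i\sim\mathbf i_D^-(n,\dots,1)\mathbf i_D^+\sim\mathbf i_A^-(1,\dots,n)\mathbf i_A^+$; $\mathrm{ind}_D(\mathbf i)=|\mathbf i_D^+|$, $\mathrm{ind}_A(\mathbf i)=|\mathbf i_A^+|$ (lengths; independent of choices). Equivalently $\mathrm{ind}_D(\mathbf i)$ is the number of nodes not on $\ell_{n+1}$ on the side of $\ell_{n+1}$ containing $L_1,\dots,L_n$, and $\mathrm{ind}_A(\mathbf i)$ the number of nodes not on $\ell_1$ on the side of $\ell_1$ containing $L_2,\dots,L_{n+1}$. *)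

theory Defs
  imports Main
begin

(* Wiring diagram of a word w = (i_1,...,i_N) (list, 0-indexed: w!j is the
   letter of the (j+1)-th node).  Wires are numbered 1..n+1, positions 1..n+1.
   wpos w j a = position of wire l_a after the first j nodes (time j);
   at time 0 wire l_a is in position a; node j swaps positions w!j, w!j+1. *)
fun wpos :: "nat list \<Rightarrow> nat \<Rightarrow> nat \<Rightarrow> nat" where
  "wpos w 0 a = a"
| "wpos w (Suc j) a =
     (let p = wpos w j a; x = w ! j in
      if p = x then Suc x else if p = Suc x then x else p)"

(* w is a reduced word of the longest element of S_{n+1}: length N = n(n+1)/2,
   letters in [n], and the product s_{i_1}...s_{i_N} is w0, i.e. at the
   bottom wire l_a is in position n+2-a. *)
definition reduced_longest :: "nat \<Rightarrow> nat list \<Rightarrow> bool" where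
  "reduced_longest n w \<longleftrightarrow>
     length w = n * (n + 1) div 2 \<and> set w \<subseteq> {1..n} \<and>
     (\<forall>a\<in>{1..n+1}. wpos w (length w) a = n + 2 - a)"

definition on_node :: "nat list \<Rightarrow> nat \<Rightarrow> nat \<Rightarrow> bool" where
  "on_node w j a \<longleftrightarrow> wpos w j a = w ! j \<or> wpos w j a = Suc (w ! j)"

(* the node l_a \<inter> l_b (unique for reduced words of w0) *)
definition cross :: "nat list \<Rightarrow> nat \<Rightarrow> nat \<Rightarrow> nat" where
  "cross w a b = (THE j. j < length w \<and> on_node w j a \<and> on_node w j b)"

(* in G(i,k) the wires l_1..l_k are oriented upward *)
definition upward :: "nat \<Rightarrow> nat \<Rightarrow> bool" where
  "upward k a \<longleftrightarrow> a \<le> k"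

(* A path is given by its wire-expression ws = [w_0,...,w_m]: it travels on
   w_t from its entry point to its exit point and switches from w_t to w_{t+1}
   at the node w_t \<inter> w_{t+1}.  Points on a wire are measured by time:
   node j has time j, the bottom end L_a has time N = length w. *)
definition seg_entry :: "nat list \<Rightarrow> nat list \<Rightarrow> nat \<Rightarrow> nat" where
  "seg_entry w ws t = (if t = 0 then length w else cross w (ws ! (t - 1)) (ws ! t))"

definition seg_exit :: "nat list \<Rightarrow> nat list \<Rightarrow> nat \<Rightarrow> nat" where
  "seg_exit w ws t = (if Suc t = length ws then length w else cross w (ws ! t) (ws ! Suc t))"

(* nodes passed straight through on the t-th segment *)
definition straight :: "nat list \<Rightarrow> nat \<Rightarrow> nat list \<Rightarrow> nat \<Rightarrow> nat list" where
  "straight w k ws t =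
     filter (\<lambda>j. on_node w j (ws ! t) \<and>
                 (if upward k (ws ! t) then seg_exit w ws t < j \<and> j < seg_entry w ws t
                  else seg_entry w ws t < j \<and> j < seg_exit w ws t)) [0..<length w]"

definition visits :: "nat list \<Rightarrow> nat \<Rightarrow> nat list \<Rightarrow> nat list" where
  "visits w k ws =
     concat (map (\<lambda>t. straight w k ws t @ (if Suc t < length ws then [seg_exit w ws t] else []))
                 [0..<length ws])"

definition rigorous_path :: "nat \<Rightarrow> nat list \<Rightarrow> nat \<Rightarrow> nat list \<Rightarrow> bool" where
  "rigorous_path n w k ws \<longleftrightarrow>
     ws \<noteq> [] \<and> hd ws = k \<and> last ws = Suc k \<and> set ws \<subseteq> {1..n+1} \<and>
     (\<forall>t. Suc t < length ws \<longrightarrow> ws ! t \<noteq> ws ! Suc t) \<and>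
     (\<forall>t<length ws. if upward k (ws ! t) then seg_exit w ws t < seg_entry w ws t
                     else seg_entry w ws t < seg_exit w ws t) \<and>
     distinct (visits w k ws) \<and>
     (\<forall>t<length ws. \<forall>j\<in>set (straight w k ws t). \<forall>b\<in>{1..n+1}.
        b \<noteq> ws ! t \<and> on_node w j b \<longrightarrow>
        \<not> (\<not> upward k (ws ! t) \<and> \<not> upward k b \<and> ws ! t > b) \<and>
        \<not> (upward k (ws ! t) \<and> upward k b \<and> ws ! t < b))"

definition path_peaks :: "nat list \<Rightarrow> nat \<Rightarrow> nat list \<Rightarrow> nat set" where
  "path_peaks w k ws =
     {cross w (ws ! t) (ws ! Suc t) | t. Suc t < length ws \<and> upward k (ws ! t) \<and> \<not> upward k (ws ! Suc t)}"

(* ind_D: nodes not on l_{n+1} on the side of l_{n+1} containing L_1..L_n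
   (the side of larger positions) *)
definition ind_D :: "nat \<Rightarrow> nat list \<Rightarrow> nat" where
  "ind_D n w = card {j. j < length w \<and> wpos w j (n + 1) < w ! j}"

(* ind_A: nodes not on l_1 on the side of l_1 containing L_2..L_{n+1}
   (the side of smaller positions) *)
definition ind_A :: "nat list \<Rightarrow> nat" where
  "ind_A w = card {j. j < length w \<and> Suc (w ! j) < wpos w j 1}"

end

theory Submission
  imports Defs "HOL-Combinatorics.Transposition"
begin

text \<open>In the wiring diagram of a reduced word of the longest element any two wires
  \<open>\<ell>\<^sub>a, \<ell>\<^sub>b\<close> (\<open>a < b\<close>) cross exactly once, and \<open>\<ell>\<^sub>a\<close> lies to the left of \<open>\<ell>\<^sub>b\<close>
  exactly down to that node; this follows by counting inversions.
  If \<open>ind\<^sub>D = 0\<close>, no node lies beyond \<open>\<ell>\<^sub>n\<^sub>+\<^sub>1\<close>, so a wire that has crossed \<open>\<ell>\<^sub>n\<^sub>+\<^sub>1\<close>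
  carries no further node. This forces the nodes \<open>\<ell>\<^sub>a \<inter> \<ell>\<^sub>n\<^sub>+\<^sub>1\<close> to appear in the order
  \<open>a = 1, \<dots>, n\<close> from top to bottom. Hence the path \<open>\<ell>\<^sub>k \<rightarrow> \<ell>\<^sub>n\<^sub>+\<^sub>1 \<rightarrow> \<ell>\<^sub>k\<^sub>+\<^sub>1\<close> passes no node
  except its two switching nodes, so it is rigorous, and its only peak is the upper one,
  \<open>\<ell>\<^sub>k \<inter> \<ell>\<^sub>n\<^sub>+\<^sub>1\<close>. The case \<open>ind\<^sub>A = 0\<close> is the mirror image with \<open>\<ell>\<^sub>1\<close>, whose crossings
  \<open>\<ell>\<^sub>1 \<inter> \<ell>\<^sub>a\<close> appear in the order \<open>a = n + 1, \<dots>, 2\<close>.\<close>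

lemma wpos_Suc: "wpos w (Suc j) a = transpose (w ! j) (Suc (w ! j)) (wpos w j a)"
  by (simp add: transpose_def Let_def)

declare wpos.simps(2) [simp del]

lemma wpos_eq_iff [simp]: "wpos w j a = wpos w j b \<longleftrightarrow> a = b"
  by (induction j) (simp_all add: wpos_Suc inj_eq[OF inj_transpose])

lemma on_node_at_most_two_wires:
  "on_node w j a \<Longrightarrow> on_node w j b \<Longrightarrow> on_node w j c \<Longrightarrow> a = b \<or> a = c \<or> b = c"
  unfolding on_node_def by (metis wpos_eq_iff)

lemma wpos_Suc_less_iff:
  assumes "a \<noteq> b"
  shows "wpos w (Suc j) a < wpos w (Suc j) b \<longleftrightarrow>
    (if on_node w j a \<and> on_node w j b then wpos w j b < wpos w j a else wpos w j a < wpos w j b)"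
proof -
  have "wpos w j a \<noteq> wpos w j b" using assms by simp
  then show ?thesis by (auto simp: wpos_Suc transpose_def on_node_def)
qed

lemma cross_commute: "cross w a b = cross w b a"
  unfolding cross_def by (simp add: conj_commute conj_left_commute)

section \<open>Paths passing no node straight through\<close>

lemma rigorous_path_two_wires:
  assumes "1 \<le> k" "k \<le> n" "cross w k (k + 1) < length w"
    and "\<And>j. cross w k (k + 1) < j \<Longrightarrow> j < length w \<Longrightarrow> \<not> on_node w j k"
    and "\<And>j. cross w k (k + 1) < j \<Longrightarrow> j < length w \<Longrightarrow> \<not> on_node w j (k + 1)"
  shows "rigorous_path n w k [k, k + 1] \<and> path_peaks w k [k, k + 1] = {cross w k (k + 1)}"
proof -
  let ?ws = "[k, k + 1]"
  have straight: "straight w k ?ws 0 = []" "straight w k ?ws 1 = []"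
    using assms(4,5) by (auto simp: straight_def filter_empty_conv seg_entry_def seg_exit_def upward_def)
  have "visits w k ?ws = [cross w k (k + 1)]"
    using straight by (simp add: visits_def upt_rec seg_exit_def)
  then have "rigorous_path n w k ?ws"
    using assms(1-3) straight
    by (simp add: rigorous_path_def upward_def less_Suc_eq seg_entry_def seg_exit_def)
  moreover have "path_peaks w k ?ws = {cross w k (k + 1)}"
    by (auto simp: path_peaks_def upward_def)
  ultimately show ?thesis by simp
qed

lemma rigorous_path_three_wires:
  assumes "1 \<le> k" "k \<le> n" "1 \<le> m" "m \<le> n + 1" "m \<noteq> k" "m \<noteq> k + 1"
    and "cross w k m < length w" "cross w m (k + 1) < length w"
    and "cross w k m \<noteq> cross w m (k + 1)"
    and "upward k m \<longleftrightarrow> cross w m (k + 1) < cross w k m"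
    and "\<And>j. cross w k m < j \<Longrightarrow> j < length w \<Longrightarrow> \<not> on_node w j k"
    and "\<And>j. min (cross w k m) (cross w m (k + 1)) < j \<Longrightarrow> j < max (cross w k m) (cross w m (k + 1))
      \<Longrightarrow> \<not> on_node w j m"
    and "\<And>j. cross w m (k + 1) < j \<Longrightarrow> j < length w \<Longrightarrow> \<not> on_node w j (k + 1)"
  shows "rigorous_path n w k [k, m, k + 1] \<and>
    path_peaks w k [k, m, k + 1] = {min (cross w k m) (cross w m (k + 1))}"
proof -
  let ?ws = "[k, m, k + 1]"
  have "straight w k ?ws 0 = []"
    using assms(11) by (auto simp: straight_def filter_empty_conv seg_entry_def seg_exit_def upward_def)
  moreover have "straight w k ?ws 1 = []"
    using assms(10,12) by (auto simp: straight_def filter_empty_conv seg_entry_def seg_exit_def)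
  moreover have "straight w k ?ws 2 = []"
    using assms(13) by (auto simp: straight_def filter_empty_conv seg_entry_def seg_exit_def upward_def)
  ultimately have straight: "straight w k ?ws t = []" if "t < 3" for t
    using that by (auto simp: less_Suc_eq numeral_3_eq_3 numeral_2_eq_2)
  have "visits w k ?ws = [cross w k m, cross w m (k + 1)]"
    using straight by (simp add: visits_def upt_rec seg_exit_def numeral_2_eq_2)
  then have "rigorous_path n w k ?ws"
    using assms(1-10) straight
    by (simp add: rigorous_path_def upward_def less_Suc_eq seg_entry_def seg_exit_def numeral_2_eq_2)
  moreover have "path_peaks w k ?ws = {if upward k m then cross w m (k + 1) else cross w k m}"
    unfolding path_peaks_def
    by (rule set_eqI) (simp add: less_Suc_eq numeral_3_eq_3 upward_def conj_disj_distribL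
        conj_disj_distribR ex_disj_distrib)
  moreover have "(if upward k m then cross w m (k + 1) else cross w k m) =
      min (cross w k m) (cross w m (k + 1))"
    using assms(9,10) by auto
  ultimately show ?thesis by simp
qed

section \<open>Reduced words of the longest element\<close>

lemma exists_change_point: "P 0 \<Longrightarrow> \<not> P m \<Longrightarrow> \<exists>j<m. P j \<and> \<not> P (Suc j)"
  by (induction m) (auto simp: less_Suc_eq)

lemma card_increasing_pairs:
  "card {(a, b). 1 \<le> a \<and> a < b \<and> b \<le> m + 1} = m * (m + 1) div (2::nat)"
proof (induction m)
  case 0
  have no_pairs: "{(a, b). 1 \<le> a \<and> a < b \<and> b \<le> 0 + (1::nat)} = {}" by auto
  show ?case unfolding no_pairs by simp
next
  case (Suc m)
  let ?old = "{(a, b). 1 \<le> a \<and> a < b \<and> b \<le> m + 1}"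
  let ?new = "(\<lambda>a. (a, m + 2)) ` {1..m + 1}"
  have split: "{(a, b). 1 \<le> a \<and> a < b \<and> b \<le> Suc m + 1} = ?old \<union> ?new"
    by (force simp: image_iff)
  have "finite ?old"
    by (rule finite_subset[of _ "{1..m + 1} \<times> {1..m + 1}"]) auto
  then have "card (?old \<union> ?new) = card ?old + card ?new"
    by (rule card_Un_disjoint) auto
  moreover have "card ?new = m + 1"
    by (simp add: card_image inj_on_def)
  ultimately show ?case unfolding split using Suc by simp
qed

locale reduced_longest_word =
  fixes n :: nat and w :: "nat list"
  assumes reduced_longest: "reduced_longest n w"
begin

lemma length_eq: "length w = n * (n + 1) div 2"
  using reduced_longest unfolding reduced_longest_def by blast

lemma wpos_length: "a \<in> {1..n + 1} \<Longrightarrow> wpos w (length w) a = n + 2 - a"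
  using reduced_longest unfolding reduced_longest_def by blast

definition wire_pairs :: "(nat \<times> nat) set" where
  "wire_pairs = {(a, b). 1 \<le> a \<and> a < b \<and> b \<le> n + 1}"

definition inversions :: "nat \<Rightarrow> (nat \<times> nat) set" where
  "inversions j = {(a, b) \<in> wire_pairs. wpos w j b < wpos w j a}"

definition node_pairs :: "nat \<Rightarrow> (nat \<times> nat) set" where
  "node_pairs j = {(a, b) \<in> wire_pairs. on_node w j a \<and> on_node w j b}"

lemma finite_wire_pairs: "finite wire_pairs"
  unfolding wire_pairs_def by (rule finite_subset[of _ "{1..n+1} \<times> {1..n+1}"]) auto

lemma finite_inversions: "finite (inversions j)"
  unfolding inversions_def by (rule finite_subset[OF _ finite_wire_pairs]) auto

lemma card_inversions_length: "card (inversions (length w)) = length w"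
proof -
  have "inversions (length w) = wire_pairs"
    unfolding inversions_def wire_pairs_def using wpos_length by auto
  then show ?thesis
    using card_increasing_pairs[of n] by (simp add: wire_pairs_def length_eq)
qed

lemma node_pairs_subsingleton:
  assumes "(a, b) \<in> node_pairs j" and "(a', b') \<in> node_pairs j"
  shows "(a, b) = (a', b')"
  using assms on_node_at_most_two_wires[of w j a b a'] on_node_at_most_two_wires[of w j a b b']
  unfolding node_pairs_def wire_pairs_def by auto

lemma inversions_Suc:
  "inversions (Suc j) = sym_diff (inversions j) (node_pairs j)"
proof -
  have "(a, b) \<in> inversions (Suc j) \<longleftrightarrow> ((a, b) \<in> inversions j \<longleftrightarrow> (a, b) \<notin> node_pairs j)"
    if "(a, b) \<in> wire_pairs" for a b
  proof -
    have "a \<noteq> b" "wpos w j a \<noteq> wpos w j b" using that by (auto simp: wire_pairs_def)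
    then show ?thesis
      using that wpos_Suc_less_iff[of b a w j] unfolding inversions_def node_pairs_def by auto
  qed
  moreover have "inversions i \<subseteq> wire_pairs" "node_pairs i \<subseteq> wire_pairs" for i
    unfolding inversions_def node_pairs_def by auto
  ultimately show ?thesis by fast
qed

lemma card_inversions_Suc_le: "card (inversions (Suc j)) \<le> Suc (card (inversions j))"
proof (cases "node_pairs j = {}")
  case True
  then show ?thesis by (simp add: inversions_Suc)
next
  case False
  then obtain x where "node_pairs j = {x}" using node_pairs_subsingleton by fast
  then have "inversions (Suc j) \<subseteq> insert x (inversions j)"
    by (auto simp: inversions_Suc)
  then have "card (inversions (Suc j)) \<le> card (insert x (inversions j))"
    by (simp add: card_mono finite_inversions)
  then show ?thesis
    using card_insert_le_m1 finite_inversions by (simp add: card_insert_if split: if_splits)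
qed

lemma card_inversions_add_le: "card (inversions (j + d)) \<le> card (inversions j) + d"
  by (induction d) (use card_inversions_Suc_le in \<open>auto intro: le_trans\<close>)

text \<open>There are as many letters as pairs of wires, all pairs are inverted at the bottom, and each
  letter changes the status of at most one pair: so every letter inverts a pair that was not
  inverted before.\<close>

lemma card_inversions: "j \<le> length w \<Longrightarrow> card (inversions j) = j"
proof -
  assume "j \<le> length w"
  have "inversions 0 = {}" unfolding inversions_def wire_pairs_def by auto
  then have "card (inversions j) \<le> j"
    using card_inversions_add_le[of 0 j] by simp
  moreover have "length w \<le> card (inversions j) + (length w - j)"
    using card_inversions_add_le[of j "length w - j"] \<open>j \<le> length w\<close> card_inversions_length by simp
  ultimately show ?thesis using \<open>j \<le> length w\<close> by linarith
qed

lemma node_pair_not_inverted: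
  assumes "j < length w" and "(a, b) \<in> node_pairs j"
  shows "(a, b) \<notin> inversions j"
proof
  assume inverted: "(a, b) \<in> inversions j"
  have "node_pairs j = {(a, b)}" using assms(2) node_pairs_subsingleton by auto
  then have "inversions (Suc j) = inversions j - {(a, b)}"
    using inverted by (simp add: inversions_Suc)
  then have "card (inversions (Suc j)) < card (inversions j)"
    using card_Diff1_less[OF finite_inversions inverted] by (simp only:)
  then show False using card_inversions[of j] card_inversions[of "Suc j"] assms(1) by simp
qed

lemma node_pairs_nonempty: "j < length w \<Longrightarrow> node_pairs j \<noteq> {}"
proof
  assume "j < length w" "node_pairs j = {}"
  then have "inversions (Suc j) = inversions j" by (simp add: inversions_Suc)
  then show False using card_inversions[of j] card_inversions[of "Suc j"] \<open>j < length w\<close> by simp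
qed

lemma exists_wires_on_node:
  "j < length w \<Longrightarrow> \<exists>a b. 1 \<le> a \<and> a < b \<and> b \<le> n + 1 \<and> on_node w j a \<and> on_node w j b"
  using node_pairs_nonempty[of j] unfolding node_pairs_def wire_pairs_def by fast

lemma wpos_less_on_node:
  assumes "1 \<le> a" "a < b" "b \<le> n + 1" "j < length w" "on_node w j a" "on_node w j b"
  shows "wpos w j a < wpos w j b"
proof -
  have "\<not> wpos w j b < wpos w j a"
    using node_pair_not_inverted[of j a b] assms
    unfolding node_pairs_def inversions_def wire_pairs_def by auto
  moreover have "wpos w j a \<noteq> wpos w j b" using assms(2) by simp
  ultimately show ?thesis by linarith
qed

lemma inversion_persists:
  assumes "1 \<le> a" "a < b" "b \<le> n + 1" "t \<le> t'" "t' \<le> length w"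
    and "wpos w t b < wpos w t a"
  shows "wpos w t' b < wpos w t' a"
  using assms(4)
proof (induction t' rule: dec_induct)
  case base
  show ?case by (rule assms(6))
next
  case (step s)
  then have "\<not> (on_node w s a \<and> on_node w s b)"
    using wpos_less_on_node[of a b s] assms(1-3,5) by auto
  then show ?case using step.IH wpos_Suc_less_iff[of b a w s] assms(2) by auto
qed

lemma wpos_less_iff_le_node:
  assumes "1 \<le> a" "a < b" "b \<le> n + 1" "j < length w" "on_node w j a" "on_node w j b"
    and "t \<le> length w"
  shows "wpos w t a < wpos w t b \<longleftrightarrow> t \<le> j"
proof
  have "wpos w (Suc j) b < wpos w (Suc j) a"
    using wpos_less_on_node[OF assms(1-6)] wpos_Suc_less_iff[of b a w j] assms by simp
  then show "t \<le> j" if "wpos w t a < wpos w t b"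
    using inversion_persists[OF assms(1-3), of "Suc j" t] that assms(7) by (cases "t \<le> j") auto
next
  show "wpos w t a < wpos w t b" if "t \<le> j"
  proof (rule ccontr)
    assume "\<not> wpos w t a < wpos w t b"
    moreover have "wpos w t a \<noteq> wpos w t b" using assms(2) by simp
    ultimately have "wpos w t b < wpos w t a" by linarith
    then have "wpos w j b < wpos w j a"
      using inversion_persists[OF assms(1-3) that] assms(4) by simp
    then show False using wpos_less_on_node[OF assms(1-6)] by simp
  qed
qed

lemma exists_common_node:
  assumes "1 \<le> a" "a < b" "b \<le> n + 1"
  shows "\<exists>j<length w. on_node w j a \<and> on_node w j b"
proof -
  let ?in_order = "\<lambda>t. wpos w t a < wpos w t b"
  have "?in_order 0" "\<not> ?in_order (length w)" using assms wpos_length by auto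
  then obtain j where j: "j < length w" "?in_order j" "\<not> ?in_order (Suc j)"
    using exists_change_point[of ?in_order "length w"] by blast
  then have "on_node w j a \<and> on_node w j b"
    using wpos_Suc_less_iff[of a b w j] assms(2) by (auto split: if_splits)
  then show ?thesis using j(1) by blast
qed

lemma common_node_eq_cross:
  assumes "1 \<le> a" "a < b" "b \<le> n + 1" "j < length w" "on_node w j a" "on_node w j b"
  shows "cross w a b = j"
  unfolding cross_def
proof (rule the_equality)
  show "j < length w \<and> on_node w j a \<and> on_node w j b" using assms by blast
next
  fix j' assume j': "j' < length w \<and> on_node w j' a \<and> on_node w j' b"
  have "j' \<le> j"
    using wpos_less_iff_le_node[OF assms, of j'] wpos_less_on_node[OF assms(1-3)] j' by simp
  moreover have "j \<le> j'"
    using wpos_less_iff_le_node[OF assms(1-3), of j' j] wpos_less_on_node[OF assms(1-6)] assms(4) j' by simp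
  ultimately show "j' = j" by simp
qed

lemma common_node_cross:
  assumes "1 \<le> a" "a < b" "b \<le> n + 1"
  shows "cross w a b < length w" "on_node w (cross w a b) a" "on_node w (cross w a b) b"
  using exists_common_node[OF assms] common_node_eq_cross[OF assms] by auto

lemma wpos_less_iff_le_cross:
  assumes "1 \<le> a" "a < b" "b \<le> n + 1" "t \<le> length w"
  shows "wpos w t a < wpos w t b \<longleftrightarrow> t \<le> cross w a b"
  using wpos_less_iff_le_node[OF assms(1-3) common_node_cross[OF assms(1-3)] assms(4)] .

subsection \<open>Vanishing D-index\<close>

context
  assumes ind_D_eq_0: "ind_D n w = 0"
begin

lemma letter_le_wpos_last_wire: "j < length w \<Longrightarrow> w ! j \<le> wpos w j (n + 1)"
  using ind_D_eq_0 unfolding ind_D_def by (auto simp: card_eq_0_iff)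

lemma no_node_after_cross_last_wire:
  assumes "1 \<le> a" "a \<le> n" "cross w a (n + 1) < j" "j < length w"
  shows "\<not> on_node w j a"
proof
  assume on_a: "on_node w j a"
  have "\<not> wpos w j a < wpos w j (n + 1)"
    using wpos_less_iff_le_cross[of a "n + 1" j] assms by simp
  moreover have "wpos w j a \<noteq> wpos w j (n + 1)" using assms(2) by simp
  ultimately have "wpos w j (n + 1) < wpos w j a" by linarith
  moreover have "\<not> on_node w j (n + 1)"
    using common_node_eq_cross[of a "n + 1" j] on_a assms by auto
  ultimately have "wpos w j (n + 1) < w ! j"
    using on_a unfolding on_node_def by auto
  then show False using letter_le_wpos_last_wire[OF assms(4)] by simp
qed

text \<open>If \<open>\<ell>\<^sub>b\<close> met \<open>\<ell>\<^sub>n\<^sub>+\<^sub>1\<close> first, then at the node \<open>\<ell>\<^sub>a \<inter> \<ell>\<^sub>n\<^sub>+\<^sub>1\<close> the wire \<open>\<ell>\<^sub>a\<close> would still be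
  left of \<open>\<ell>\<^sub>b\<close>, so \<open>\<ell>\<^sub>a \<inter> \<ell>\<^sub>b\<close> would be a node of \<open>\<ell>\<^sub>b\<close> below its crossing with \<open>\<ell>\<^sub>n\<^sub>+\<^sub>1\<close>.\<close>

lemma cross_last_wire_strict_mono:
  assumes "1 \<le> a" "a < b" "b \<le> n"
  shows "cross w a (n + 1) < cross w b (n + 1)"
proof (rule ccontr)
  define c where "c = cross w a (n + 1)"
  assume "\<not> c < cross w b (n + 1)"
  moreover have "c \<noteq> cross w b (n + 1)"
    using on_node_at_most_two_wires[of w c a b "n + 1"] common_node_cross[of a "n + 1"]
      common_node_cross[of b "n + 1"] assms unfolding c_def by force
  ultimately have after_b: "cross w b (n + 1) < c" by simp
  have c_node: "c < length w" using common_node_cross[of a "n + 1"] assms unfolding c_def by simp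
  have "wpos w c a < wpos w c (n + 1)"
    using wpos_less_iff_le_cross[of a "n + 1" c] assms c_node unfolding c_def by simp
  moreover have "\<not> wpos w c b < wpos w c (n + 1)"
    using wpos_less_iff_le_cross[of b "n + 1" c] assms c_node after_b by simp
  moreover have "wpos w c b \<noteq> wpos w c (n + 1)" using assms by simp
  ultimately have "wpos w c a < wpos w c b" by linarith
  then have "c \<le> cross w a b"
    using wpos_less_iff_le_cross[of a b c] assms c_node by simp
  then show False
    using no_node_after_cross_last_wire[of b "cross w a b"] common_node_cross[of a b] assms after_b
    by simp
qed

lemma node_on_last_wire_eq_cross:
  assumes "j < length w" "on_node w j (n + 1)"
  obtains a where "1 \<le> a" "a \<le> n" "j = cross w a (n + 1)"
proof -
  obtain a b where ab: "1 \<le> a" "a < b" "b \<le> n + 1" "on_node w j a" "on_node w j b"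
    using exists_wires_on_node[OF assms(1)] by blast
  then have "b = n + 1" using on_node_at_most_two_wires[of w j "n + 1" a b] assms by auto
  then show ?thesis using that ab common_node_eq_cross[of a "n + 1" j] assms by simp
qed

lemma cross_last_wire_less_iff:
  assumes "1 \<le> a" "a \<le> n" "1 \<le> b" "b \<le> n"
  shows "cross w a (n + 1) < cross w b (n + 1) \<longleftrightarrow> a < b"
  using cross_last_wire_strict_mono[of a b] cross_last_wire_strict_mono[of b a] assms
  by (cases a b rule: linorder_cases) auto

lemma next_cross_on_last_wire:
  assumes "1 \<le> k" "k \<le> n" "cross w k (n + 1) < j" "j < length w" "on_node w j (n + 1)"
  shows "k < n \<and> cross w (k + 1) (n + 1) \<le> j"
proof -
  obtain a where a: "1 \<le> a" "a \<le> n" "j = cross w a (n + 1)"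
    using node_on_last_wire_eq_cross[OF assms(4,5)] by blast
  then have "k < a" using cross_last_wire_less_iff[of k a] assms(1-3) by simp
  then show ?thesis
    using cross_last_wire_less_iff[of a "k + 1"] a by (auto simp: not_less)
qed

lemma D_canonical_path:
  assumes "1 \<le> k" "k \<le> n"
  shows "rigorous_path n w k (remdups_adj [k, n + 1, k + 1]) \<and>
    path_peaks w k (remdups_adj [k, n + 1, k + 1]) = {cross w k (n + 1)}"
proof -
  have after_k: "\<not> on_node w j k" if "cross w k (n + 1) < j" "j < length w" for j
    using no_node_after_cross_last_wire[of k j] that assms by simp
  have between: "\<not> on_node w j (n + 1)" if "cross w k (n + 1) < j" "j < length w"
    "k < n \<Longrightarrow> j < cross w (k + 1) (n + 1)" for j
    using next_cross_on_last_wire[of k j] that assms by auto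
  show ?thesis
  proof (cases "k = n")
    case True
    have "rigorous_path n w k [k, k + 1] \<and> path_peaks w k [k, k + 1] = {cross w k (k + 1)}"
      by (rule rigorous_path_two_wires)
        (use assms True after_k between common_node_cross[of n "n + 1"] in auto)
    then show ?thesis using True by simp
  next
    case False
    have after_k1: "\<not> on_node w j (k + 1)" if "cross w (k + 1) (n + 1) < j" "j < length w" for j
      using no_node_after_cross_last_wire[of "k + 1" j] that assms False by simp
    have "cross w k (n + 1) < cross w (k + 1) (n + 1)"
      using cross_last_wire_less_iff[of k "k + 1"] assms False by simp
    moreover have "cross w (n + 1) (k + 1) = cross w (k + 1) (n + 1)" by (rule cross_commute)
    moreover have "rigorous_path n w k [k, n + 1, k + 1] \<and>
        path_peaks w k [k, n + 1, k + 1] = {min (cross w k (n + 1)) (cross w (n + 1) (k + 1))}"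
      by (rule rigorous_path_three_wires)
        (use assms False calculation after_k between after_k1 common_node_cross[of k "n + 1"]
          common_node_cross[of "k + 1" "n + 1"] in \<open>auto simp: upward_def\<close>)
    ultimately show ?thesis using False assms by simp
  qed
qed

end

subsection \<open>Vanishing A-index\<close>

context
  assumes ind_A_eq_0: "ind_A w = 0"
begin

lemma wpos_first_wire_le_letter: "j < length w \<Longrightarrow> wpos w j 1 \<le> Suc (w ! j)"
  using ind_A_eq_0 unfolding ind_A_def by (auto simp: card_eq_0_iff)

lemma no_node_after_cross_first_wire:
  assumes "2 \<le> a" "a \<le> n + 1" "cross w 1 a < j" "j < length w"
  shows "\<not> on_node w j a"
proof
  assume on_a: "on_node w j a"
  have "\<not> wpos w j 1 < wpos w j a"
    using wpos_less_iff_le_cross[of 1 a j] assms by simp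
  moreover have "wpos w j 1 \<noteq> wpos w j a" using assms(1) by simp
  ultimately have "wpos w j a < wpos w j 1" by linarith
  moreover have "\<not> on_node w j 1"
    using common_node_eq_cross[of 1 a j] on_a assms by auto
  ultimately have "Suc (w ! j) < wpos w j 1"
    using on_a unfolding on_node_def by auto
  then show False using wpos_first_wire_le_letter[OF assms(4)] by simp
qed

lemma cross_first_wire_strict_antimono:
  assumes "2 \<le> a" "a < b" "b \<le> n + 1"
  shows "cross w 1 b < cross w 1 a"
proof (rule ccontr)
  define c where "c = cross w 1 b"
  assume "\<not> c < cross w 1 a"
  moreover have "c \<noteq> cross w 1 a"
    using on_node_at_most_two_wires[of w c 1 a b] common_node_cross[of 1 a]
      common_node_cross[of 1 b] assms unfolding c_def by force
  ultimately have after_a: "cross w 1 a < c" by simp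
  have c_node: "c < length w" using common_node_cross[of 1 b] assms unfolding c_def by simp
  have "wpos w c 1 < wpos w c b"
    using wpos_less_iff_le_cross[of 1 b c] assms c_node unfolding c_def by simp
  moreover have "\<not> wpos w c 1 < wpos w c a"
    using wpos_less_iff_le_cross[of 1 a c] assms c_node after_a by simp
  moreover have "wpos w c 1 \<noteq> wpos w c a" using assms by simp
  ultimately have "wpos w c a < wpos w c b" by linarith
  then have "c \<le> cross w a b"
    using wpos_less_iff_le_cross[of a b c] assms c_node by simp
  then show False
    using no_node_after_cross_first_wire[of a "cross w a b"] common_node_cross[of a b] assms after_a
    by simp
qed

lemma cross_first_wire_less_iff:
  assumes "2 \<le> a" "a \<le> n + 1" "2 \<le> b" "b \<le> n + 1"
  shows "cross w 1 a < cross w 1 b \<longleftrightarrow> b < a"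
  using cross_first_wire_strict_antimono[of a b] cross_first_wire_strict_antimono[of b a] assms
  by (cases a b rule: linorder_cases) auto

lemma node_on_first_wire_eq_cross:
  assumes "j < length w" "on_node w j 1"
  obtains b where "2 \<le> b" "b \<le> n + 1" "j = cross w 1 b"
proof -
  obtain a b where ab: "1 \<le> a" "a < b" "b \<le> n + 1" "on_node w j a" "on_node w j b"
    using exists_wires_on_node[OF assms(1)] by blast
  then have "a = 1" using on_node_at_most_two_wires[of w j 1 a b] assms by auto
  then show ?thesis using that[of b] ab common_node_eq_cross[of 1 b j] assms by auto
qed

lemma next_cross_on_first_wire:
  assumes "1 \<le> k" "k \<le> n" "cross w 1 (k + 1) < j" "j < length w" "on_node w j 1"
  shows "2 \<le> k \<and> cross w 1 k \<le> j"
proof -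
  obtain b where b: "2 \<le> b" "b \<le> n + 1" "j = cross w 1 b"
    using node_on_first_wire_eq_cross[OF assms(4,5)] by blast
  then have "b < k + 1" using cross_first_wire_less_iff[of "k + 1" b] assms(1-3) by simp
  then show ?thesis
    using cross_first_wire_less_iff[of b k] b assms(2) by (auto simp: not_less)
qed

lemma A_canonical_path:
  assumes "1 \<le> k" "k \<le> n"
  shows "rigorous_path n w k (remdups_adj [k, 1, k + 1]) \<and>
    path_peaks w k (remdups_adj [k, 1, k + 1]) = {cross w 1 (k + 1)}"
proof -
  have between: "\<not> on_node w j 1" if "cross w 1 (k + 1) < j" "j < length w"
    "2 \<le> k \<Longrightarrow> j < cross w 1 k" for j
    using next_cross_on_first_wire[of k j] that assms by auto
  have after_k1: "\<not> on_node w j (k + 1)" if "cross w 1 (k + 1) < j" "j < length w" for j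
    using no_node_after_cross_first_wire[of "k + 1" j] that assms by simp
  show ?thesis
  proof (cases "k = 1")
    case True
    have "rigorous_path n w k [k, k + 1] \<and> path_peaks w k [k, k + 1] = {cross w k (k + 1)}"
      by (rule rigorous_path_two_wires)
        (use assms True between after_k1 common_node_cross[of 1 "1 + 1"] in auto)
    then show ?thesis using True by (simp add: numeral_2_eq_2)
  next
    case False
    have after_k: "\<not> on_node w j k" if "cross w 1 k < j" "j < length w" for j
      using no_node_after_cross_first_wire[of k j] that assms False by simp
    have "cross w 1 (k + 1) < cross w 1 k"
      using cross_first_wire_less_iff[of "k + 1" k] assms False by simp
    moreover have "cross w k 1 = cross w 1 k" by (rule cross_commute)
    moreover have "rigorous_path n w k [k, 1, k + 1] \<and>
        path_peaks w k [k, 1, k + 1] = {min (cross w k 1) (cross w 1 (k + 1))}"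
      by (rule rigorous_path_three_wires)
        (use assms False calculation after_k between after_k1 common_node_cross[of 1 k]
          common_node_cross[of 1 "k + 1"] in \<open>auto simp: upward_def\<close>)
    ultimately show ?thesis using False assms by simp
  qed
qed

end

end

theorem mainTheorem14:
  fixes n :: nat and w :: "nat list"
  assumes "n \<ge> 1" and "reduced_longest n w"
  shows "(ind_D n w = 0 \<longrightarrow>
            (\<forall>k\<in>{1..n}. rigorous_path n w k (remdups_adj [k, n + 1, k + 1]) \<and>
                        path_peaks w k (remdups_adj [k, n + 1, k + 1]) = {cross w k (n + 1)}))
       \<and> (ind_A w = 0 \<longrightarrow>
            (\<forall>k\<in>{1..n}. rigorous_path n w k (remdups_adj [k, 1, k + 1]) \<and>
                        path_peaks w k (remdups_adj [k, 1, k + 1]) = {cross w 1 (k + 1)}))"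
proof -
  interpret reduced_longest_word n w by unfold_locales (rule assms(2))
  show ?thesis using D_canonical_path A_canonical_path by simp
qed

end
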